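(* Consider optimal control problem OCP-1 (described in the context). Let $u_*^1$ be an optimal control with optimal trajectory $(s_*^1,e_*^1,i_*^1,j_*^1)$, and let $\psi_*=(\psi_1^*,\psi_2^*,\psi_3^*,\psi_4^* )$ be the corresponding adjoint function from the Pontryagin maximum principle, with $u_*^1(t)$ maximizing the Hamiltonian $H(s_*^1(t),e_*^1(t),i_*^1(t),j_*^1(t),\psi_*(t),u)$ over $u\in[0,u_{\max}]$. Then at $t=T$ the optimal control is positive, $u_*^1(T)>0$, and it takes either the value $\lambda_*^1(T)$ or the value $u_{\max}$.
   Context: Parameters: $\beta_1,\beta_2,\gamma,\rho_1,\rho_2>0$; $\sigma_1,\sigma_2>0$ with $\sigma_1+\sigma_2=1$; $0\le u_{\max}<1$; weights $\alpha_1,\alpha_2\ge0$, $\alpha_3>0$; horizon $T>0$; initial values $s_0,e_0,i_0,j_0>0$ with $s_0+e_0+i_0+j_0\le 1$. The admissible controls are all Lebesgue measurable $u:[0,T]\to[0,u_{\max}]$. The state system is $s'=-s(\beta_1(1-u)^2i+\beta_2(1-u)j)$, $e'=s(\beta_1(1-u)^2i+\beta_2(1-u)j)-\gamma e$, $i'=\sigma_1\gamma e-\rho_1 i$, $j'=\sigma_2\gamma e-\rho_2 j$, with $s(0)=s_0,e(0)=e_0,i(0)=i_0,j(0)=j_0$. OCP-1 is the problem of minimizing $Q(u)=\alpha_1(e(T)+i(T)+j(T))+\alpha_2\int_0^T(e+i+j)\,dt+0.5\alpha_3\int_0^Tu^2\,dt$ over admissible controls. Its Hamiltonian is $H(s,e,i,j,\psi_1,\dots,\psi_4,u)=-s(\beta_1(1-u)^2i+\beta_2(1-u)j)(\psi_1-\psi_2)-\gamma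 e(\psi_2-\sigma_1\psi_3-\sigma_2\psi_4)-\rho_1 i\psi_3-\rho_2 j\psi_4-\alpha_2(e+i+j)-0.5\alpha_3u^2$. The adjoint function $\psi_*$ is a nontrivial solution of $\psi_1'=(\beta_1(1-u_*^1)^2i_*^1+\beta_2(1-u_*^1)j_*^1)(\psi_1-\psi_2)$, $\psi_2'=\gamma(\psi_2-\sigma_1\psi_3-\sigma_2\psi_4)+\alpha_2$, $\psi_3'=\beta_1(1-u_*^1)^2s_*^1(\psi_1-\psi_2)+\rho_1\psi_3+\alpha_2$, $\psi_4'=\beta_2(1-u_*^1)s_*^1(\psi_1-\psi_2)+\rho_2\psi_4+\alpha_2$, with $\psi_1(T)=0$, $\psi_2(T)=\psi_3(T)=\psi_4(T)=-\alpha_1$. Define $A_*(t)=\beta_1s_*^1(t)i_*^1(t)(\psi_1^*(t)-\psi_2^*(t))+0.5\alpha_3$, $B_*(t)=s_*^1(t)(2\beta_1i_*^1(t)+\beta_2j_*^1(t))(\psi_1^*(t)-\psi_2^*(t))$, and, whenever $A_*(t)\neq0$, the indicator function $\lambda_*^1(t)=0.5B_*(t)/A_*(t)$. *)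

theory Defs
  imports "HOL-Analysis.Analysis"
begin

record params =
  beta1 :: real
  beta2 :: real
  gam :: real
  rho1 :: real
  rho2 :: real
  sig1 :: real
  sig2 :: real
  umax :: real
  alpha1 :: real
  alpha2 :: real
  alpha3 :: real
  horizon :: real
  s0 :: real
  e0 :: real
  i0 :: real
  j0 :: real

definition standing_assms :: "params \<Rightarrow> bool" where
  "standing_assms p \<longleftrightarrow>
     beta1 p > 0 \<and> beta2 p > 0 \<and> gam p > 0 \<and> rho1 p > 0 \<and> rho2 p > 0 \<and>
     sig1 p > 0 \<and> sig2 p > 0 \<and> sig1 p + sig2 p = 1 \<and>
     0 \<le> umax p \<and> umax p < 1 \<and>
     alpha1 p \<ge> 0 \<and> alpha2 p \<ge> 0 \<and> alpha3 p > 0 \<and> horizon p > 0 \<and>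
     s0 p > 0 \<and> e0 p > 0 \<and> i0 p > 0 \<and> j0 p > 0 \<and>
     s0 p + e0 p + i0 p + j0 p \<le> 1"

definition admissible :: "params \<Rightarrow> (real \<Rightarrow> real) \<Rightarrow> bool" where
  "admissible p u \<longleftrightarrow> u measurable_on {0..horizon p} \<and>
     (\<forall>t\<in>{0..horizon p}. 0 \<le> u t \<and> u t \<le> umax p)"

definition incid :: "params \<Rightarrow> real \<Rightarrow> real \<Rightarrow> real \<Rightarrow> real \<Rightarrow> real" where
  "incid p u s i j = s * (beta1 p * (1 - u)\<^sup>2 * i + beta2 p * (1 - u) * j)"

definition state_sol :: "params \<Rightarrow> (real \<Rightarrow> real) \<Rightarrow> (real \<Rightarrow> real) \<Rightarrow> (real \<Rightarrow> real)
    \<Rightarrow> (real \<Rightarrow> real) \<Rightarrow> (real \<Rightarrow> real) \<Rightarrow> bool" where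
  "state_sol p u s e i j \<longleftrightarrow>
     (let T = horizon p;
          fs = (\<lambda>t. - incid p (u t) (s t) (i t) (j t));
          fe = (\<lambda>t. incid p (u t) (s t) (i t) (j t) - gam p * e t);
          fi = (\<lambda>t. sig1 p * gam p * e t - rho1 p * i t);
          fj = (\<lambda>t. sig2 p * gam p * e t - rho2 p * j t)
      in fs integrable_on {0..T} \<and> fe integrable_on {0..T} \<and>
         fi integrable_on {0..T} \<and> fj integrable_on {0..T} \<and>
         (\<forall>t\<in>{0..T}.
            s t = s0 p + integral {0..t} fs \<and>
            e t = e0 p + integral {0..t} fe \<and>
            i t = i0 p + integral {0..t} fi \<and>
            j t = j0 p + integral {0..t} fj))"

definition cost :: "params \<Rightarrow> (real \<Rightarrow> real) \<Rightarrow> (real \<Rightarrow> real) \<Rightarrow> (real \<Rightarrow> real)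
    \<Rightarrow> (real \<Rightarrow> real) \<Rightarrow> real" where
  "cost p u e i j =
     alpha1 p * (e (horizon p) + i (horizon p) + j (horizon p))
     + alpha2 p * integral {0..horizon p} (\<lambda>t. e t + i t + j t)
     + 0.5 * alpha3 p * integral {0..horizon p} (\<lambda>t. (u t)\<^sup>2)"

definition optimal :: "params \<Rightarrow> (real \<Rightarrow> real) \<Rightarrow> (real \<Rightarrow> real) \<Rightarrow> (real \<Rightarrow> real)
    \<Rightarrow> (real \<Rightarrow> real) \<Rightarrow> (real \<Rightarrow> real) \<Rightarrow> bool" where
  "optimal p u s e i j \<longleftrightarrow> admissible p u \<and> state_sol p u s e i j \<and>
     (\<forall>v s' e' i' j'. admissible p v \<longrightarrow> state_sol p v s' e' i' j' \<longrightarrow>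
        cost p u e i j \<le> cost p v e' i' j')"

definition hamiltonian :: "params \<Rightarrow> real \<Rightarrow> real \<Rightarrow> real \<Rightarrow> real \<Rightarrow> real \<Rightarrow> real
    \<Rightarrow> real \<Rightarrow> real \<Rightarrow> real \<Rightarrow> real" where
  "hamiltonian p s e i j \<psi>1 \<psi>2 \<psi>3 \<psi>4 u =
     - incid p u s i j * (\<psi>1 - \<psi>2)
     - gam p * e * (\<psi>2 - sig1 p * \<psi>3 - sig2 p * \<psi>4)
     - rho1 p * i * \<psi>3 - rho2 p * j * \<psi>4
     - alpha2 p * (e + i + j) - 0.5 * alpha3 p * u\<^sup>2"

definition adjoint_sol :: "params \<Rightarrow> (real \<Rightarrow> real) \<Rightarrow> (real \<Rightarrow> real) \<Rightarrow> (real \<Rightarrow> real)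
    \<Rightarrow> (real \<Rightarrow> real) \<Rightarrow> (real \<Rightarrow> real) \<Rightarrow> (real \<Rightarrow> real) \<Rightarrow> (real \<Rightarrow> real)
    \<Rightarrow> (real \<Rightarrow> real) \<Rightarrow> bool" where
  "adjoint_sol p u s i j \<psi>1 \<psi>2 \<psi>3 \<psi>4 \<longleftrightarrow>
     (let T = horizon p;
          g1 = (\<lambda>t. (beta1 p * (1 - u t)\<^sup>2 * i t + beta2 p * (1 - u t) * j t) * (\<psi>1 t - \<psi>2 t));
          g2 = (\<lambda>t. gam p * (\<psi>2 t - sig1 p * \<psi>3 t - sig2 p * \<psi>4 t) + alpha2 p);
          g3 = (\<lambda>t. beta1 p * (1 - u t)\<^sup>2 * s t * (\<psi>1 t - \<psi>2 t) + rho1 p * \<psi>3 t + alpha2 p);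
          g4 = (\<lambda>t. beta2 p * (1 - u t) * s t * (\<psi>1 t - \<psi>2 t) + rho2 p * \<psi>4 t + alpha2 p)
      in g1 integrable_on {0..T} \<and> g2 integrable_on {0..T} \<and>
         g3 integrable_on {0..T} \<and> g4 integrable_on {0..T} \<and>
         \<psi>1 T = 0 \<and> \<psi>2 T = - alpha1 p \<and> \<psi>3 T = - alpha1 p \<and> \<psi>4 T = - alpha1 p \<and>
         (\<forall>t\<in>{0..T}.
            \<psi>1 t = \<psi>1 T - integral {t..T} g1 \<and>
            \<psi>2 t = \<psi>2 T - integral {t..T} g2 \<and>
            \<psi>3 t = \<psi>3 T - integral {t..T} g3 \<and>
            \<psi>4 t = \<psi>4 T - integral {t..T} g4) \<and>
         (\<exists>t\<in>{0..T}. (\<psi>1 t, \<psi>2 t, \<psi>3 t, \<psi>4 t) \<noteq> (0, 0, 0, 0)))"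

definition A_star :: "params \<Rightarrow> real \<Rightarrow> real \<Rightarrow> real \<Rightarrow> real \<Rightarrow> real" where
  "A_star p s i \<psi>1 \<psi>2 = beta1 p * s * i * (\<psi>1 - \<psi>2) + 0.5 * alpha3 p"

definition B_star :: "params \<Rightarrow> real \<Rightarrow> real \<Rightarrow> real \<Rightarrow> real \<Rightarrow> real \<Rightarrow> real" where
  "B_star p s i j \<psi>1 \<psi>2 = s * (2 * beta1 p * i + beta2 p * j) * (\<psi>1 - \<psi>2)"

text \<open>Indicator function lambda = 0.5 B / A (meaningful when A \<noteq> 0).\<close>
definition lambda_star :: "params \<Rightarrow> real \<Rightarrow> real \<Rightarrow> real \<Rightarrow> real \<Rightarrow> real \<Rightarrow> real" where
  "lambda_star p s i j \<psi>1 \<psi>2 = 0.5 * B_star p s i j \<psi>1 \<psi>2 / A_star p s i \<psi>1 \<psi>2"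

end

theory Submission
  imports Defs
begin

text \<open>At the final time the transversality conditions give \<open>\<psi>1 - \<psi>2 = \<alpha>1 > 0\<close>, so as soon as
  the state is positive, the Hamiltonian is, as a function of the control, a strictly concave
  parabola \<open>B v - A v\<^sup>2 + const\<close> with \<open>A, B > 0\<close>. Its maximizer over \<open>[0, umax]\<close> is
  \<open>min (B / (2 A)) umax > 0\<close>, i.e. \<open>\<lambda>\<close> or \<open>umax\<close>. Positivity of the state follows by looking at
  the first time one of the components vanishes: each component obeys \<open>x' \<ge> - c x\<close> there, and
  a solution of such an inequality cannot reach zero in finite time.\<close>

lemma continuous_on_integral_eq:
  fixes x f :: "real \<Rightarrow> real"
  assumes "f integrable_on {a..b}" and "\<forall>t\<in>{a..b}. x t = x0 + integral {a..t} f"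
  shows "continuous_on {a..b} x"
proof -
  have "continuous_on {a..b} (\<lambda>t. x0 + integral {a..t} f)"
    by (intro continuous_on_add continuous_on_const indefinite_integral_continuous_1 assms(1))
  then show ?thesis
    using assms(2) by (metis (no_types, lifting) continuous_on_cong)
qed

lemma integral_eq_decay_backward_le:
  fixes x f :: "real \<Rightarrow> real"
  assumes f: "f integrable_on {a..b}"
    and x: "\<forall>t\<in>{a..b}. x t = x0 + integral {a..t} f"
    and decay: "\<forall>t\<in>{a..b}. f t \<ge> - c * x t"
    and \<tau>: "\<tau> \<in> {a..b}"
  shows "x \<tau> \<le> x b + c * integral {\<tau>..b} x"
proof -
  have "integral {a..\<tau>} f + integral {\<tau>..b} f = integral {a..b} f"
    using \<tau> by (intro Henstock_Kurzweil_Integration.integral_combine f) auto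
  then have "x b - x \<tau> = integral {\<tau>..b} f"
    using x \<tau> by auto
  also have "\<dots> \<ge> integral {\<tau>..b} (\<lambda>t. - c * x t)"
  proof (rule integral_le)
    have "x integrable_on {\<tau>..b}"
      using \<tau> by (intro integrable_continuous_interval
          continuous_on_subset[OF continuous_on_integral_eq[OF f x]]) auto
    then show "(\<lambda>t. - c * x t) integrable_on {\<tau>..b}"
      using integrable_on_cmult_left[of x "{\<tau>..b}" "- c"] by simp
    show "f integrable_on {\<tau>..b}"
      using \<tau> by (intro integrable_subinterval_real[OF f]) auto
  qed (use \<tau> decay in auto)
  finally show ?thesis by simp
qed

lemma linear_decay_bound_nonzero:
  fixes x f :: "real \<Rightarrow> real"
  assumes f: "f integrable_on {a..b}"
    and x: "\<forall>t\<in>{a..b}. x t = x0 + integral {a..t} f"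
    and ab: "a < b" and c: "c \<ge> 0"
    and decay: "\<forall>t\<in>{a..b}. f t \<ge> - c * x t"
    and pos: "\<forall>t\<in>{a..<b}. x t > 0"
  shows "x b \<noteq> 0"
proof
  assume xb: "x b = 0"
  have cont: "continuous_on {a..b} x"
    using continuous_on_integral_eq[OF f x] .
  \<comment> \<open>On a window of length less than \<open>1 / c\<close> before \<open>b\<close>, the bound would make the maximum of
    \<open>x\<close> exceed itself.\<close>
  define t where "t = max a (b - 1 / (2 * (c + 1)))"
  have t: "a \<le> t" "t < b"
    using ab c by (auto simp: t_def)
  have "c * (b - t) \<le> c * (1 / (2 * (c + 1)))"
    using c by (intro mult_left_mono) (auto simp: t_def)
  also have "\<dots> < 1"
    using c by (simp add: field_simps)
  finally have window: "c * (b - t) < 1" .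
  have cont_window: "continuous_on {t..b} x"
    using t by (intro continuous_on_subset[OF cont]) auto
  obtain \<tau> where \<tau>: "\<tau> \<in> {t..b}" and max: "\<forall>y\<in>{t..b}. x y \<le> x \<tau>"
    using continuous_attains_sup[OF compact_Icc _ cont_window] t by auto
  have "0 < x t" using pos t by auto
  also have "\<dots> \<le> x \<tau>" using max t by auto
  finally have "0 < x \<tau>" .
  have "x \<tau> \<le> c * integral {\<tau>..b} x"
    using integral_eq_decay_backward_le[OF f x decay, of \<tau>] xb \<tau> t by auto
  also have "\<dots> \<le> c * ((b - \<tau>) * x \<tau>)"
  proof (rule mult_left_mono)
    have "integral {\<tau>..b} x \<le> integral {\<tau>..b} (\<lambda>_. x \<tau>)"
      using max \<tau> t
      by (intro integral_le integrable_const_ivl integrable_continuous_interval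
          continuous_on_subset[OF cont]) auto
    then show "integral {\<tau>..b} x \<le> (b - \<tau>) * x \<tau>"
      using \<tau> by simp
  qed (rule c)
  also have "\<dots> < x \<tau>"
  proof -
    have "c * (b - \<tau>) \<le> c * (b - t)"
      using \<tau> c by (intro mult_left_mono) auto
    then have "c * (b - \<tau>) < 1"
      using window by linarith
    then show ?thesis
      using \<open>0 < x \<tau>\<close> by (simp add: mult.assoc[symmetric])
  qed
  finally show False by simp
qed

lemma continuous_first_zero:
  fixes m :: "real \<Rightarrow> real"
  assumes cont: "continuous_on {a..b} m" and "m a > 0" and "t \<in> {a..b}" and "m t \<le> 0"
  obtains t1 where "t1 \<in> {a<..b}" "m t1 = 0" "\<forall>\<tau>\<in>{a..<t1}. m \<tau> > 0"
proof -
  define Z where "Z = {a..b} \<inter> m -` {..0}"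
  have "Z \<noteq> {}"
    using assms(3,4) by (auto simp: Z_def)
  moreover have "bdd_below Z"
    unfolding Z_def by (rule bdd_belowI[of _ a]) simp
  moreover have "closed Z"
    unfolding Z_def by (intro continuous_closed_preimage cont closed_atLeastAtMost closed_atMost)
  ultimately have "Inf Z \<in> Z"
    by (rule closed_contains_Inf)
  define t1 where "t1 = Inf Z"
  have t1: "t1 \<in> {a..b}" "m t1 \<le> 0"
    using \<open>Inf Z \<in> Z\<close> by (auto simp: Z_def t1_def)
  have before: "\<forall>\<tau>\<in>{a..<t1}. m \<tau> > 0"
  proof
    fix \<tau> assume \<tau>: "\<tau> \<in> {a..<t1}"
    have "\<tau> \<notin> Z"
      using \<tau> cInf_lower[OF _ \<open>bdd_below Z\<close>, of \<tau>] by (auto simp: t1_def)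
    then show "m \<tau> > 0"
      using \<tau> t1 by (auto simp: Z_def)
  qed
  have "a < t1"
    using t1 \<open>m a > 0\<close> by (cases "t1 = a") auto
  then have "closure {a..<t1} = {a..t1}"
    by simp
  then have "m t1 \<ge> 0"
    using continuous_ge_on_closure[of "{a..<t1}" m t1 0] continuous_on_subset[OF cont, of "{a..t1}"]
      t1 before \<open>a < t1\<close> by (simp add: less_imp_le)
  then show ?thesis
    using that \<open>a < t1\<close> t1 before by auto
qed

lemma incid_bounds:
  assumes "beta1 p \<ge> 0" "beta2 p \<ge> 0" "0 \<le> u" "u \<le> 1" "0 \<le> s" "0 \<le> i" "0 \<le> j"
  shows "0 \<le> incid p u s i j \<and> incid p u s i j \<le> s * (beta1 p * i + beta2 p * j)"
proof -
  have "(1 - u)\<^sup>2 \<le> 1"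
    using assms by (simp add: power_le_one)
  then have "beta1 p * (1 - u)\<^sup>2 * i \<le> beta1 p * i"
    using mult_left_le[of "(1 - u)\<^sup>2" "beta1 p * i"] assms by (simp add: ac_simps)
  moreover have "beta2 p * (1 - u) * j \<le> beta2 p * j"
    using mult_left_le[of "1 - u" "beta2 p * j"] assms by (simp add: ac_simps)
  ultimately have "beta1 p * (1 - u)\<^sup>2 * i + beta2 p * (1 - u) * j \<le> beta1 p * i + beta2 p * j"
    by linarith
  moreover have "0 \<le> beta1 p * (1 - u)\<^sup>2 * i + beta2 p * (1 - u) * j"
    using assms by simp
  ultimately show ?thesis
    unfolding incid_def using assms by (simp add: mult_left_mono)
qed

lemma state_sol_continuous:
  assumes "state_sol p u s e i j"
  shows "continuous_on {0..horizon p} s" "continuous_on {0..horizon p} e"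
    "continuous_on {0..horizon p} i" "continuous_on {0..horizon p} j"
  using assms unfolding state_sol_def Let_def by (auto intro: continuous_on_integral_eq)

lemma state_sol_incid_bound:
  assumes sa: "standing_assms p" and ad: "admissible p u" and ss: "state_sol p u s e i j"
  obtains K where "K \<ge> 0"
    "\<And>\<tau>. \<tau> \<in> {0..horizon p} \<Longrightarrow> 0 \<le> s \<tau> \<Longrightarrow> 0 \<le> i \<tau> \<Longrightarrow> 0 \<le> j \<tau> \<Longrightarrow>
      0 \<le> incid p (u \<tau>) (s \<tau>) (i \<tau>) (j \<tau>) \<and> incid p (u \<tau>) (s \<tau>) (i \<tau>) (j \<tau>) \<le> K * s \<tau>"
proof -
  have cont_rate: "continuous_on {0..horizon p} (\<lambda>\<tau>. beta1 p * i \<tau> + beta2 p * j \<tau>)"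
    using state_sol_continuous[OF ss] by (intro continuous_on_add continuous_on_mult_left) auto
  obtain K where K: "K \<ge> 0"
    "\<And>\<tau>. \<tau> \<in> {0..horizon p} \<Longrightarrow> norm (beta1 p * i \<tau> + beta2 p * j \<tau>) \<le> K"
    using continuous_on_compact_bound[OF compact_Icc cont_rate] by blast
  show thesis
  proof (rule that[OF K(1)])
    fix \<tau> assume \<tau>: "\<tau> \<in> {0..horizon p}" and nonneg: "0 \<le> s \<tau>" "0 \<le> i \<tau>" "0 \<le> j \<tau>"
    have "0 \<le> u \<tau>" "u \<tau> \<le> umax p"
      using ad \<tau> by (auto simp: admissible_def)
    moreover have "umax p < 1" "beta1 p \<ge> 0" "beta2 p \<ge> 0"
      using sa by (auto simp: standing_assms_def)
    moreover have "s \<tau> * (beta1 p * i \<tau> + beta2 p * j \<tau>) \<le> K * s \<tau>"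
      using mult_right_mono[OF abs_le_D1[OF K(2)[OF \<tau>, unfolded real_norm_def]], of "s \<tau>"] nonneg
      by (simp add: mult.commute)
    ultimately show "0 \<le> incid p (u \<tau>) (s \<tau>) (i \<tau>) (j \<tau>) \<and> incid p (u \<tau>) (s \<tau>) (i \<tau>) (j \<tau>) \<le> K * s \<tau>"
      using incid_bounds[of p "u \<tau>" "s \<tau>" "i \<tau>" "j \<tau>"] nonneg by auto
  qed
qed

lemma state_sol_positive:
  assumes sa: "standing_assms p" and ad: "admissible p u" and ss: "state_sol p u s e i j"
    and t: "t \<in> {0..horizon p}"
  shows "s t > 0 \<and> e t > 0 \<and> i t > 0 \<and> j t > 0"
proof (rule ccontr)
  assume neg: "\<not> ?thesis"
  define T where "T = horizon p"
  define fs where "fs = (\<lambda>t. - incid p (u t) (s t) (i t) (j t))"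
  define fe where "fe = (\<lambda>t. incid p (u t) (s t) (i t) (j t) - gam p * e t)"
  define fi where "fi = (\<lambda>t. sig1 p * gam p * e t - rho1 p * i t)"
  define fj where "fj = (\<lambda>t. sig2 p * gam p * e t - rho2 p * j t)"
  have I: "fs integrable_on {0..T}" "fe integrable_on {0..T}"
    "fi integrable_on {0..T}" "fj integrable_on {0..T}"
    and E: "\<forall>t\<in>{0..T}. s t = s0 p + integral {0..t} fs" "\<forall>t\<in>{0..T}. e t = e0 p + integral {0..t} fe"
    "\<forall>t\<in>{0..T}. i t = i0 p + integral {0..t} fi" "\<forall>t\<in>{0..T}. j t = j0 p + integral {0..t} fj"
    using ss unfolding state_sol_def Let_def fs_def fe_def fi_def fj_def T_def by auto
  define m where "m \<tau> = min (min (s \<tau>) (e \<tau>)) (min (i \<tau>) (j \<tau>))" for \<tau>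
  have "continuous_on {0..T} m"
    unfolding m_def T_def by (intro continuous_on_min state_sol_continuous[OF ss])
  moreover have "m 0 > 0"
    using E sa by (auto simp: m_def standing_assms_def T_def)
  moreover have "t \<in> {0..T}"
    using t by (simp add: T_def)
  moreover have "m t \<le> 0"
    using neg by (auto simp: m_def)
  ultimately obtain t1 where t1: "t1 \<in> {0<..T}" "m t1 = 0" "\<forall>\<tau>\<in>{0..<t1}. m \<tau> > 0"
    by (rule continuous_first_zero)
  have before: "s \<tau> > 0 \<and> e \<tau> > 0 \<and> i \<tau> > 0 \<and> j \<tau> > 0" if "\<tau> \<in> {0..<t1}" for \<tau>
    using t1(3) that by (auto simp: m_def)
  have nonneg: "0 \<le> s \<tau> \<and> 0 \<le> e \<tau> \<and> 0 \<le> i \<tau> \<and> 0 \<le> j \<tau>" if "\<tau> \<in> {0..t1}" for \<tau>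
    using before[of \<tau>] t1(2) that by (cases "\<tau> = t1") (auto simp: m_def)
  obtain K where "K \<ge> 0" and incid_le:
    "\<And>\<tau>. \<tau> \<in> {0..horizon p} \<Longrightarrow> 0 \<le> s \<tau> \<Longrightarrow> 0 \<le> i \<tau> \<Longrightarrow> 0 \<le> j \<tau> \<Longrightarrow>
      0 \<le> incid p (u \<tau>) (s \<tau>) (i \<tau>) (j \<tau>) \<and> incid p (u \<tau>) (s \<tau>) (i \<tau>) (j \<tau>) \<le> K * s \<tau>"
    using state_sol_incid_bound[OF sa ad ss] by blast
  have incid: "0 \<le> incid p (u \<tau>) (s \<tau>) (i \<tau>) (j \<tau>) \<and> incid p (u \<tau>) (s \<tau>) (i \<tau>) (j \<tau>) \<le> K * s \<tau>"
    if "\<tau> \<in> {0..t1}" for \<tau>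
    using incid_le[of \<tau>] nonneg[OF that] that t1(1) by (auto simp: T_def)
  have decay: "\<forall>\<tau>\<in>{0..t1}. fs \<tau> \<ge> - K * s \<tau>" "\<forall>\<tau>\<in>{0..t1}. fe \<tau> \<ge> - gam p * e \<tau>"
    "\<forall>\<tau>\<in>{0..t1}. fi \<tau> \<ge> - rho1 p * i \<tau>" "\<forall>\<tau>\<in>{0..t1}. fj \<tau> \<ge> - rho2 p * j \<tau>"
    using incid nonneg sa by (auto simp: fs_def fe_def fi_def fj_def standing_assms_def)
  have nonzero: "x t1 \<noteq> 0"
    if "g integrable_on {0..T}" "\<forall>\<tau>\<in>{0..T}. x \<tau> = x0 + integral {0..\<tau>} g" "c \<ge> 0"
      "\<forall>\<tau>\<in>{0..t1}. g \<tau> \<ge> - c * x \<tau>" "\<forall>\<tau>\<in>{0..<t1}. x \<tau> > 0"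
    for x g :: "real \<Rightarrow> real" and c x0
  proof (rule linear_decay_bound_nonzero[of g 0 t1 x x0 c])
    show "g integrable_on {0..t1}"
      using t1 by (intro integrable_subinterval_real[OF that(1)]) auto
  qed (use that t1 in auto)
  have "s t1 \<noteq> 0" "e t1 \<noteq> 0" "i t1 \<noteq> 0" "j t1 \<noteq> 0"
    using nonzero[OF I(1) E(1) \<open>K \<ge> 0\<close> decay(1)] nonzero[OF I(2) E(2) _ decay(2)]
      nonzero[OF I(3) E(3) _ decay(3)] nonzero[OF I(4) E(4) _ decay(4)] before sa
    by (auto simp: standing_assms_def)
  then show False
    using t1(2) by (simp add: m_def min_def split: if_splits)
qed

lemma hamiltonian_quadratic_in_control:
  "hamiltonian p S E I J P1 P2 P3 P4 v
     = hamiltonian p S E I J P1 P2 P3 P4 0 + B_star p S I J P1 P2 * v - A_star p S I P1 P2 * v\<^sup>2"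
  unfolding hamiltonian_def A_star_def B_star_def incid_def
  by (simp add: power2_eq_square algebra_simps)

lemma concave_quadratic_maximizer:
  fixes a b um w :: real
  assumes a: "a > 0" and b: "b > 0" and um: "um > 0" and w: "w \<in> {0..um}"
    and max: "\<forall>v\<in>{0..um}. b * v - a * v\<^sup>2 \<le> b * w - a * w\<^sup>2"
  shows "w > 0 \<and> (w = 0.5 * b / a \<or> w = um)"
proof -
  define l where "l = 0.5 * b / a"
  have "l > 0"
    using a b by (simp add: l_def)
  have gain: "b * v - a * v\<^sup>2 - (b * w - a * w\<^sup>2) = a * (v - w) * (2 * l - v - w)" for v
    using a by (simp add: l_def power2_eq_square field_simps)
  have "min um l \<le> w"
  proof (rule ccontr)
    assume "\<not> min um l \<le> w"
    then have "a * (min um l - w) * (2 * l - min um l - w) > 0"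
      using a by (intro mult_pos_pos) auto
    moreover have "b * min um l - a * (min um l)\<^sup>2 \<le> b * w - a * w\<^sup>2"
      using max um \<open>l > 0\<close> by simp
    ultimately show False
      using gain[of "min um l"] by linarith
  qed
  moreover have "w \<le> l"
  proof (rule ccontr)
    assume "\<not> w \<le> l"
    have "a * (l - w) * (2 * l - l - w) = a * (w - l)\<^sup>2"
      by (simp add: power2_eq_square algebra_simps)
    moreover have "a * (w - l)\<^sup>2 > 0"
      using a \<open>\<not> w \<le> l\<close> by simp
    moreover have "b * l - a * l\<^sup>2 \<le> b * w - a * w\<^sup>2"
      using max w \<open>l > 0\<close> \<open>\<not> w \<le> l\<close> by simp
    ultimately show False
      using gain[of l] by linarith
  qed
  ultimately show ?thesis
    using w um \<open>l > 0\<close> by (auto simp: l_def min_def split: if_splits)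
qed

theorem lemma3:
  fixes p :: params and u s e i j \<psi>1 \<psi>2 \<psi>3 \<psi>4 :: "real \<Rightarrow> real"
  assumes "standing_assms p"
    and "alpha1 p > 0" and "umax p > 0"
    and "optimal p u s e i j"
    and "adjoint_sol p u s i j \<psi>1 \<psi>2 \<psi>3 \<psi>4"
    and "\<forall>t\<in>{0..horizon p}. \<forall>v\<in>{0..umax p}.
           hamiltonian p (s t) (e t) (i t) (j t) (\<psi>1 t) (\<psi>2 t) (\<psi>3 t) (\<psi>4 t) v
           \<le> hamiltonian p (s t) (e t) (i t) (j t) (\<psi>1 t) (\<psi>2 t) (\<psi>3 t) (\<psi>4 t) (u t)"
  shows "u (horizon p) > 0 \<and>
         A_star p (s (horizon p)) (i (horizon p)) (\<psi>1 (horizon p)) (\<psi>2 (horizon p)) \<noteq> 0 \<and>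
         (u (horizon p) = lambda_star p (s (horizon p)) (i (horizon p)) (j (horizon p))
                            (\<psi>1 (horizon p)) (\<psi>2 (horizon p))
          \<or> u (horizon p) = umax p)"
proof -
  define T where "T = horizon p"
  define A where "A = A_star p (s T) (i T) (\<psi>1 T) (\<psi>2 T)"
  define B where "B = B_star p (s T) (i T) (j T) (\<psi>1 T) (\<psi>2 T)"
  define H where "H = hamiltonian p (s T) (e T) (i T) (j T) (\<psi>1 T) (\<psi>2 T) (\<psi>3 T) (\<psi>4 T)"
  have ad: "admissible p u" and T: "T \<in> {0..T}"
    using assms(1,4) by (auto simp: optimal_def standing_assms_def T_def)
  have "s T > 0" "i T > 0" "j T > 0"
    using state_sol_positive[OF assms(1) ad _ T[unfolded T_def]] assms(4)
    by (auto simp: optimal_def T_def)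
  moreover have "\<psi>1 T - \<psi>2 T = alpha1 p"
    using assms(5) by (simp add: adjoint_sol_def Let_def T_def)
  ultimately have "A > 0" "B > 0"
    using assms(1,2)
    by (auto simp: A_def B_def A_star_def B_star_def standing_assms_def intro!: add_pos_pos mult_pos_pos)
  have quadratic: "H v = H 0 + B * v - A * v\<^sup>2" for v
    unfolding H_def A_def B_def by (rule hamiltonian_quadratic_in_control)
  have "\<forall>v\<in>{0..umax p}. B * v - A * v\<^sup>2 \<le> B * u T - A * (u T)\<^sup>2"
  proof
    fix v assume "v \<in> {0..umax p}"
    then have "H v \<le> H (u T)"
      using assms(6) T unfolding H_def T_def by blast
    then show "B * v - A * v\<^sup>2 \<le> B * u T - A * (u T)\<^sup>2"
      using quadratic[of v] quadratic[of "u T"] by linarith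
  qed
  with \<open>A > 0\<close> \<open>B > 0\<close> assms(3) ad T show ?thesis
    using concave_quadratic_maximizer[of A B "umax p" "u T"]
    by (auto simp: admissible_def A_def B_def T_def lambda_star_def)
qed

end
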